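(* In the setting of the memory-$\tau$ lace expansion for self-avoiding walk on $\mathbb Z^d$, the $n$-th coefficient $\alpha_n$ of the formal series expansion $\beta_\tau=\sum_{n\ge1}\alpha_n s^n$ does not depend on $\tau$ as long as $\tau\ge 2n-2$ (including $\tau=\infty$).
   Context: For $\tau\in\{1,2,\dots\}\cup\{\infty\}$, a memory-$\tau$ walk is a nearest-neighbour walk $\omega$ on $\mathbb Z^d$ with $\omega(i)\ne\omega(j)$ whenever $0<|i-j|\le\tau$. The memory-$\tau$ lace expansion (Brydges–Spencer) produces coefficients $c_{a,b}=c_{a,b}(\tau)$, $(a,b)\in I=\{b\ge1,\ b+1\le a\le 2b\}$, defined from counts of memory-$\tau$ lace graphs of length $a$; $c_{a,b}(\tau)$ is independent of $\tau$ once $\tau\ge a$. The series $\sum_n\alpha_n s^n$ is the unique formal power series solution $\beta$ of $\beta=s[1+\sum_{(a,b)\in I}c_{a,b}(\tau)\beta^a s^{b-a}]$, $s=1/(2d)$. *)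

theory Defs
  imports "HOL-Computational_Algebra.Formal_Power_Series" "HOL-Library.Extended_Nat"
begin

definition lace_index :: "(nat \<times> nat) set" where
  "lace_index = {(a, b). 1 \<le> b \<and> b + 1 \<le> a \<and> a \<le> 2 * b}"

text \<open>Memory parameter tau in {1,2,...} union {infinity}, modelled as enat with tau >= 1.
  The coefficients c a b tau are given as a function of type nat => nat => enat => real.\<close>

text \<open>Coefficient of s^n in the (formally Laurent) series
  sum over (a,b) in I of c(a,b) * beta^a * s^(b-a), for a power series beta with zero
  constant term.  The coefficient of s^n in beta^a s^(b-a) is the coefficient of
  s^(n+a-b) in beta^a, which vanishes when b > n (since beta^a has order >= a);
  hence only b <= n contribute and the sum below is exact.\<close>
definition lace_rhs :: "(nat \<Rightarrow> nat \<Rightarrow> enat \<Rightarrow> real) \<Rightarrow> enat \<Rightarrow> real fps \<Rightarrow> real fps" where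
  "lace_rhs c \<tau> \<beta> = Abs_fps (\<lambda>n. \<Sum>b\<in>{1..n}. \<Sum>a\<in>{b+1..2*b}.
       c a b \<tau> * fps_nth (\<beta> ^ a) (n + a - b))"

definition lace_solution :: "(nat \<Rightarrow> nat \<Rightarrow> enat \<Rightarrow> real) \<Rightarrow> enat \<Rightarrow> real fps \<Rightarrow> bool" where
  "lace_solution c \<tau> \<beta> \<longleftrightarrow> fps_nth \<beta> 0 = 0 \<and> \<beta> = fps_X * (1 + lace_rhs c \<tau> \<beta>)"

definition beta_tau :: "(nat \<Rightarrow> nat \<Rightarrow> enat \<Rightarrow> real) \<Rightarrow> enat \<Rightarrow> real fps" where
  "beta_tau c \<tau> = (THE \<beta>. lace_solution c \<tau> \<beta>)"

definition alpha :: "(nat \<Rightarrow> nat \<Rightarrow> enat \<Rightarrow> real) \<Rightarrow> enat \<Rightarrow> nat \<Rightarrow> real" where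
  "alpha c \<tau> n = fps_nth (beta_tau c \<tau>) n"

end

theory Submission
  imports Defs
begin

(* The defining equation beta = s (1 + sum c_{a,b} beta^a s^(b-a)) is a
   triangular recursion for the coefficients: since beta has zero constant term, the
   coefficient of s^m in beta^a s^(b-a) only involves coefficients of beta of degree at
   most m, and only terms with b <= m contribute.  Hence alpha_{m+1} is determined by
   alpha_1, ..., alpha_m and by the coefficients c_{a,b} with b <= m, i.e. a <= 2m.
   By strong induction, alpha_n is determined by the c_{a,b} with b < n, so a <= 2n - 2,
   and these coincide for all memory parameters tau >= 2n - 2.

   Existence (by Picard iteration)
   and uniqueness of the solution make beta_tau a genuine solution, and the theorem
   follows from the comparison lemma. *)

unbundle fps_syntax

definition agree_upto :: "nat \<Rightarrow> 'a fps \<Rightarrow> 'a fps \<Rightarrow> bool" where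
  "agree_upto k f g \<longleftrightarrow> (\<forall>i\<le>k. f $ i = g $ i)"

lemma agree_upto_mult:
  fixes f g h h' :: "'a::comm_semiring_1 fps"
  assumes "agree_upto k f g" "agree_upto k h h'"
  shows "agree_upto k (f * h) (g * h')"
  using assms unfolding agree_upto_def fps_mult_nth by (auto intro!: sum.cong)

lemma agree_upto_power:
  fixes f g :: "'a::comm_semiring_1 fps"
  assumes "agree_upto k f g"
  shows "agree_upto k (f ^ a) (g ^ a)"
proof (induction a)
  case 0
  then show ?case by (simp add: agree_upto_def)
next
  case (Suc a)
  then show ?case using assms agree_upto_mult by (metis power_Suc)
qed

lemma power_nth_via_shift:
  fixes \<beta> :: "'a::comm_semiring_1 fps"
  assumes "\<beta> $ 0 = 0"
  shows "(\<beta> ^ a) $ (j + a) = (fps_shift 1 \<beta> ^ a) $ j"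
proof -
  have "\<beta> = fps_X * fps_shift 1 \<beta>"
    using assms by (intro fps_ext) auto
  then have "\<beta> ^ a = fps_X ^ a * fps_shift 1 \<beta> ^ a"
    by (metis power_mult_distrib)
  then show ?thesis by (simp add: fps_X_power_mult_nth)
qed

lemma power_nth_local:
  fixes \<beta> \<gamma> :: "'a::comm_semiring_1 fps"
  assumes "\<beta> $ 0 = 0" "\<gamma> $ 0 = 0" "agree_upto (Suc j) \<beta> \<gamma>"
  shows "(\<beta> ^ a) $ (j + a) = (\<gamma> ^ a) $ (j + a)"
proof -
  have "agree_upto j (fps_shift 1 \<beta>) (fps_shift 1 \<gamma>)"
    using assms(3) by (simp add: agree_upto_def)
  then have "agree_upto j (fps_shift 1 \<beta> ^ a) (fps_shift 1 \<gamma> ^ a)"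
    by (rule agree_upto_power)
  then show ?thesis
    using assms(1,2) by (simp add: power_nth_via_shift agree_upto_def)
qed

lemma lace_rhs_local:
  fixes \<beta> \<gamma> :: "real fps"
  assumes "\<beta> $ 0 = 0" "\<gamma> $ 0 = 0" "agree_upto m \<beta> \<gamma>"
    and "\<And>a b. 1 \<le> b \<Longrightarrow> b \<le> m \<Longrightarrow> b + 1 \<le> a \<Longrightarrow> a \<le> 2 * b \<Longrightarrow> c a b \<tau> = c' a b \<tau>'"
  shows "lace_rhs c \<tau> \<beta> $ m = lace_rhs c' \<tau>' \<gamma> $ m"
proof -
  have "c a b \<tau> * (\<beta> ^ a) $ (m + a - b) = c' a b \<tau>' * (\<gamma> ^ a) $ (m + a - b)"
    if "b \<in> {1..m}" "a \<in> {b + 1..2 * b}" for a b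
  proof -
    have idx: "m + a - b = (m - b) + a" and "Suc (m - b) \<le> m"
      using that by auto
    then have "agree_upto (Suc (m - b)) \<beta> \<gamma>"
      using assms(3) by (simp add: agree_upto_def)
    with assms(1,2) have "(\<beta> ^ a) $ (m + a - b) = (\<gamma> ^ a) $ (m + a - b)"
      unfolding idx by (rule power_nth_local)
    then show ?thesis using assms(4) that by auto
  qed
  then show ?thesis
    unfolding lace_rhs_def fps_nth_Abs_fps by (intro sum.cong refl) auto
qed

lemma lace_solution_nth:
  assumes "lace_solution c \<tau> \<beta>"
  shows "\<beta> $ 0 = 0" "\<beta> $ Suc m = (if m = 0 then 1 else 0) + lace_rhs c \<tau> \<beta> $ m"
proof -
  from assms have eq: "\<beta> = fps_X * (1 + lace_rhs c \<tau> \<beta>)" and "\<beta> $ 0 = 0"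
    unfolding lace_solution_def by auto
  then show "\<beta> $ 0 = 0" by simp
  have "\<beta> $ Suc m = (fps_X * (1 + lace_rhs c \<tau> \<beta>)) $ Suc m"
    using eq by simp
  then show "\<beta> $ Suc m = (if m = 0 then 1 else 0) + lace_rhs c \<tau> \<beta> $ m"
    by simp
qed

lemma lace_solutions_agree:
  assumes \<beta>: "lace_solution c \<tau> \<beta>" and \<gamma>: "lace_solution c' \<tau>' \<gamma>"
    and c_eq: "\<And>a b. 1 \<le> b \<Longrightarrow> b < N \<Longrightarrow> b + 1 \<le> a \<Longrightarrow> a \<le> 2 * b \<Longrightarrow> c a b \<tau> = c' a b \<tau>'"
  shows "agree_upto N \<beta> \<gamma>"
proof -
  have "\<beta> $ k = \<gamma> $ k" if "k \<le> N" for k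
    using that
  proof (induction k rule: less_induct)
    case (less k)
    show ?case
    proof (cases k)
      case 0
      then show ?thesis using lace_solution_nth(1)[OF \<beta>] lace_solution_nth(1)[OF \<gamma>] by simp
    next
      case (Suc m)
      have "agree_upto m \<beta> \<gamma>"
        using less Suc by (simp add: agree_upto_def)
      then have "lace_rhs c \<tau> \<beta> $ m = lace_rhs c' \<tau>' \<gamma> $ m"
        using lace_solution_nth(1)[OF \<beta>] lace_solution_nth(1)[OF \<gamma>] less.prems Suc
        by (intro lace_rhs_local c_eq) auto
      then show ?thesis
        using Suc lace_solution_nth(2)[OF \<beta>] lace_solution_nth(2)[OF \<gamma>] by simp
    qed
  qed
  then show ?thesis by (simp add: agree_upto_def)
qed

lemma lace_solution_unique:
  assumes "lace_solution c \<tau> \<beta>" "lace_solution c \<tau> \<gamma>"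
  shows "\<beta> = \<gamma>"
proof (rule fps_ext)
  fix k
  show "\<beta> $ k = \<gamma> $ k"
    using lace_solutions_agree[OF assms, of k] by (simp add: agree_upto_def)
qed

primrec picard :: "(nat \<Rightarrow> nat \<Rightarrow> enat \<Rightarrow> real) \<Rightarrow> enat \<Rightarrow> nat \<Rightarrow> real fps" where
  "picard c \<tau> 0 = 0"
| "picard c \<tau> (Suc k) = fps_X * (1 + lace_rhs c \<tau> (picard c \<tau> k))"

lemma picard_nth_0 [simp]: "picard c \<tau> k $ 0 = 0"
  by (cases k) auto

lemma picard_step_agree: "agree_upto k (picard c \<tau> k) (picard c \<tau> (Suc k))"
proof (induction k)
  case 0
  then show ?case by (simp add: agree_upto_def)
next
  case (Suc k)
  have "picard c \<tau> (Suc k) $ i = picard c \<tau> (Suc (Suc k)) $ i" if "i \<le> Suc k" for i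
  proof (cases i)
    case 0
    then show ?thesis by simp
  next
    case (Suc m)
    have "agree_upto m (picard c \<tau> k) (picard c \<tau> (Suc k))"
      using Suc.IH \<open>i \<le> Suc k\<close> Suc by (simp add: agree_upto_def)
    then have "lace_rhs c \<tau> (picard c \<tau> k) $ m = lace_rhs c \<tau> (picard c \<tau> (Suc k)) $ m"
      by (intro lace_rhs_local) auto
    then show ?thesis using Suc by simp
  qed
  then show ?case by (simp add: agree_upto_def)
qed

lemma picard_stable:
  assumes "k \<le> j"
  shows "agree_upto k (picard c \<tau> k) (picard c \<tau> j)"
  using assms
proof (induction j)
  case 0
  then show ?case by (simp add: agree_upto_def)
next
  case (Suc j)
  show ?case
  proof (cases "k = Suc j")
    case True
    then show ?thesis by (simp add: agree_upto_def)
  next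
    case False
    with Suc have "agree_upto k (picard c \<tau> k) (picard c \<tau> j)" by simp
    moreover have "agree_upto k (picard c \<tau> j) (picard c \<tau> (Suc j))"
      using picard_step_agree[of j c \<tau>] False Suc.prems by (simp add: agree_upto_def)
    ultimately show ?thesis by (simp add: agree_upto_def)
  qed
qed

text \<open>The diagonal of the Picard iterates solves the lace equation.\<close>
lemma lace_solution_exists: "\<exists>\<beta>. lace_solution c \<tau> \<beta>"
proof -
  define \<beta> where "\<beta> = Abs_fps (\<lambda>i. picard c \<tau> i $ i)"
  have agree: "agree_upto k \<beta> (picard c \<tau> k)" for k
    using picard_stable unfolding agree_upto_def \<beta>_def by simp
  have \<beta>0: "\<beta> $ 0 = 0" unfolding \<beta>_def by simp
  have "\<beta> $ i = (fps_X * (1 + lace_rhs c \<tau> \<beta>)) $ i" for i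
  proof (cases i)
    case 0
    then show ?thesis using \<beta>0 by simp
  next
    case (Suc m)
    have "lace_rhs c \<tau> \<beta> $ m = lace_rhs c \<tau> (picard c \<tau> m) $ m"
      using agree[of m] \<beta>0 by (intro lace_rhs_local) auto
    moreover have "\<beta> $ i = picard c \<tau> (Suc m) $ Suc m"
      unfolding \<beta>_def Suc by simp
    ultimately show ?thesis using Suc by simp
  qed
  then have "\<beta> = fps_X * (1 + lace_rhs c \<tau> \<beta>)" by (rule fps_ext)
  then show ?thesis using \<beta>0 unfolding lace_solution_def by blast
qed

lemma beta_tau_solution: "lace_solution c \<tau> (beta_tau c \<tau>)"
proof -
  obtain \<beta> where \<beta>: "lace_solution c \<tau> \<beta>" using lace_solution_exists by blast
  show ?thesis
    unfolding beta_tau_def using \<beta> lace_solution_unique[OF _ \<beta>] by (rule theI)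
qed

theorem mainTheorem3:
  fixes c :: "nat \<Rightarrow> nat \<Rightarrow> enat \<Rightarrow> real" and n :: nat and \<tau> \<tau>' :: enat
  assumes c_stable: "\<And>a b \<sigma> \<sigma>'. (a, b) \<in> lace_index \<Longrightarrow> 1 \<le> \<sigma> \<Longrightarrow> 1 \<le> \<sigma>' \<Longrightarrow>
              enat a \<le> \<sigma> \<Longrightarrow> enat a \<le> \<sigma>' \<Longrightarrow> c a b \<sigma> = c a b \<sigma>'"
    and "1 \<le> n"
    and "1 \<le> \<tau>" and "1 \<le> \<tau>'"
    and "enat (2 * n - 2) \<le> \<tau>" and "enat (2 * n - 2) \<le> \<tau>'"
  shows "alpha c \<tau> n = alpha c \<tau>' n"
proof -
  text \<open>Only \<open>c\<^sub>a\<^sub>,\<^sub>b\<close> with \<open>b < n\<close>, hence \<open>a \<le> 2n - 2\<close>, influence \<open>\<alpha>\<^sub>n\<close>.\<close>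
  have c_eq: "c a b \<tau> = c a b \<tau>'" if "1 \<le> b" "b < n" "b + 1 \<le> a" "a \<le> 2 * b" for a b
  proof -
    have "enat a \<le> enat (2 * n - 2)" using that by simp
    then have "enat a \<le> \<tau>" "enat a \<le> \<tau>'" using assms(5,6) order_trans by blast+
    then show ?thesis
      using that assms(3,4) by (intro c_stable) (auto simp: lace_index_def)
  qed
  have "agree_upto n (beta_tau c \<tau>) (beta_tau c \<tau>')"
    using beta_tau_solution beta_tau_solution c_eq by (rule lace_solutions_agree)
  then show ?thesis by (simp add: alpha_def agree_upto_def)
qed

end
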